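(* Let $G$ be a belt with partition $Q_1,\dots,Q_5,R_2,R_3$. Then: (a) for each $j\in\{2,3\}$, any two non-adjacent vertices of $R_j$ have no common neighbor in $Q_{5-j}$; (b) there are no edges between $R_2$ and $R_3$; (c) for each $j\in\{2,3\}$, every vertex of $Q_j$ that has a neighbor in $R_{5-j}$ is complete to $Q_{5-j}$; (d) $G[R_2]$ and $G[R_3]$ are $(P_4,2P_3)$-free.
   Context: A belt is a $(P_6,C_4,C_6)$-free graph whose vertex set is partitioned into seven sets $Q_1,\dots,Q_5,R_2,R_3$ such that: $Q_1,\dots,Q_5$ are non-empty cliques; $Q_1$ is complete to $Q_2\cup R_2\cup Q_5$ and $Q_4$ is complete to $Q_3\cup R_3\cup Q_5$; $Q_1$ is anticomplete to $Q_3\cup R_3\cup Q_4$, $Q_4$ is anticomplete to $Q_2\cup R_2\cup Q_1$, $Q_5$ is anticomplete to $Q_2\cup R_2\cup Q_3\cup R_3$; for each $j\in\{2,3\}$, $Q_j$ is complete to $R_j$, every vertex of $Q_j\cup R_j$ has a neighbor in $Q_{5-j}\cup R_{5-j}$, and no vertex of $R_j$ is adjacent to all other vertices of $R_j$. Complete/anticomplete: all edges / no edges between the sets. $2P_3$ is the disjoint union of two copies of $P_3$. *)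

theory Defs
  imports Main
begin

text \<open>A finite simple graph: finite vertex set V and a symmetric irreflexive
adjacency relation E (only its restriction to V matters).\<close>
definition graph :: "'a set \<Rightarrow> ('a \<Rightarrow> 'a \<Rightarrow> bool) \<Rightarrow> bool" where
  "graph V E \<longleftrightarrow> finite V \<and> (\<forall>x y. E x y \<longrightarrow> E y x) \<and> (\<forall>x. \<not> E x x)"

definition has_induced :: "'a set \<Rightarrow> ('a \<Rightarrow> 'a \<Rightarrow> bool) \<Rightarrow> nat \<Rightarrow> (nat \<Rightarrow> nat \<Rightarrow> bool) \<Rightarrow> bool" where
  "has_induced V E n HE \<longleftrightarrow> (\<exists>f. (\<forall>i<n. f i \<in> V) \<and> inj_on f {..<n} \<and>
      (\<forall>i<n. \<forall>j<n. E (f i) (f j) \<longleftrightarrow> HE i j))"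

definition path_edges :: "nat \<Rightarrow> nat \<Rightarrow> bool" where
  "path_edges i j \<longleftrightarrow> i + 1 = j \<or> j + 1 = i"

definition P_free :: "nat \<Rightarrow> 'a set \<Rightarrow> ('a \<Rightarrow> 'a \<Rightarrow> bool) \<Rightarrow> bool" where
  "P_free n V E \<longleftrightarrow> \<not> has_induced V E n path_edges"

definition cycle_edges :: "nat \<Rightarrow> nat \<Rightarrow> nat \<Rightarrow> bool" where
  "cycle_edges n i j \<longleftrightarrow> path_edges i j \<or> (i = 0 \<and> j = n - 1) \<or> (j = 0 \<and> i = n - 1)"

definition C_free :: "nat \<Rightarrow> 'a set \<Rightarrow> ('a \<Rightarrow> 'a \<Rightarrow> bool) \<Rightarrow> bool" where
  "C_free n V E \<longleftrightarrow> \<not> has_induced V E n (cycle_edges n)"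

definition twoP3_edges :: "nat \<Rightarrow> nat \<Rightarrow> bool" where
  "twoP3_edges i j \<longleftrightarrow> (path_edges i j \<and> i \<le> 2 \<and> j \<le> 2) \<or>
                        (path_edges i j \<and> 3 \<le> i \<and> 3 \<le> j)"

definition twoP3_free :: "'a set \<Rightarrow> ('a \<Rightarrow> 'a \<Rightarrow> bool) \<Rightarrow> bool" where
  "twoP3_free V E \<longleftrightarrow> \<not> has_induced V E 6 twoP3_edges"

definition clique :: "('a \<Rightarrow> 'a \<Rightarrow> bool) \<Rightarrow> 'a set \<Rightarrow> bool" where
  "clique E Q \<longleftrightarrow> (\<forall>x\<in>Q. \<forall>y\<in>Q. x \<noteq> y \<longrightarrow> E x y)"

definition complete :: "('a \<Rightarrow> 'a \<Rightarrow> bool) \<Rightarrow> 'a set \<Rightarrow> 'a set \<Rightarrow> bool" where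
  "complete E A B \<longleftrightarrow> (\<forall>x\<in>A. \<forall>y\<in>B. E x y)"

definition anticomplete :: "('a \<Rightarrow> 'a \<Rightarrow> bool) \<Rightarrow> 'a set \<Rightarrow> 'a set \<Rightarrow> bool" where
  "anticomplete E A B \<longleftrightarrow> (\<forall>x\<in>A. \<forall>y\<in>B. \<not> E x y)"

definition belt :: "'a set \<Rightarrow> ('a \<Rightarrow> 'a \<Rightarrow> bool) \<Rightarrow> 'a set \<Rightarrow> 'a set \<Rightarrow> 'a set \<Rightarrow> 'a set \<Rightarrow> 'a set
    \<Rightarrow> 'a set \<Rightarrow> 'a set \<Rightarrow> bool" where
  "belt V E Q1 Q2 Q3 Q4 Q5 R2 R3 \<longleftrightarrow>
     graph V E \<and> P_free 6 V E \<and> C_free 4 V E \<and> C_free 6 V E \<and>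
     \<comment> \<open>partition of V into seven sets\<close>
     Q1 \<union> Q2 \<union> Q3 \<union> Q4 \<union> Q5 \<union> R2 \<union> R3 = V \<and>
     Q1 \<inter> Q2 = {} \<and> Q1 \<inter> Q3 = {} \<and> Q1 \<inter> Q4 = {} \<and> Q1 \<inter> Q5 = {} \<and> Q1 \<inter> R2 = {} \<and> Q1 \<inter> R3 = {} \<and>
     Q2 \<inter> Q3 = {} \<and> Q2 \<inter> Q4 = {} \<and> Q2 \<inter> Q5 = {} \<and> Q2 \<inter> R2 = {} \<and> Q2 \<inter> R3 = {} \<and>
     Q3 \<inter> Q4 = {} \<and> Q3 \<inter> Q5 = {} \<and> Q3 \<inter> R2 = {} \<and> Q3 \<inter> R3 = {} \<and>
     Q4 \<inter> Q5 = {} \<and> Q4 \<inter> R2 = {} \<and> Q4 \<inter> R3 = {} \<and>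
     Q5 \<inter> R2 = {} \<and> Q5 \<inter> R3 = {} \<and>
     R2 \<inter> R3 = {} \<and>
     \<comment> \<open>Q1..Q5 non-empty cliques\<close>
     Q1 \<noteq> {} \<and> Q2 \<noteq> {} \<and> Q3 \<noteq> {} \<and> Q4 \<noteq> {} \<and> Q5 \<noteq> {} \<and>
     clique E Q1 \<and> clique E Q2 \<and> clique E Q3 \<and> clique E Q4 \<and> clique E Q5 \<and>
     complete E Q1 (Q2 \<union> R2 \<union> Q5) \<and> complete E Q4 (Q3 \<union> R3 \<union> Q5) \<and>
     anticomplete E Q1 (Q3 \<union> R3 \<union> Q4) \<and> anticomplete E Q4 (Q2 \<union> R2 \<union> Q1) \<and>
     anticomplete E Q5 (Q2 \<union> R2 \<union> Q3 \<union> R3) \<and>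
     complete E Q2 R2 \<and> complete E Q3 R3 \<and>
     (\<forall>v\<in>Q2 \<union> R2. \<exists>u\<in>Q3 \<union> R3. E v u) \<and>
     (\<forall>v\<in>Q3 \<union> R3. \<exists>u\<in>Q2 \<union> R2. E v u) \<and>
     (\<forall>v\<in>R2. \<not> (\<forall>u\<in>R2. u \<noteq> v \<longrightarrow> E v u)) \<and>
     (\<forall>v\<in>R3. \<not> (\<forall>u\<in>R3. u \<noteq> v \<longrightarrow> E v u))"

end

theory Submission
  imports Defs
begin

text \<open>The belt is symmetric under exchanging Q1, Q2, R2 with Q4, Q3, R3, so each claim is
proved for one side only. Since Q1 is complete to R2 and anticomplete to Q3 \<union> R3, two
non-adjacent vertices of R2 with a common neighbour in Q3 \<union> R3 span an induced C4 through Q1;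
this is (a). Given an edge uv from R2 to R3, choose non-neighbours u' of u in R2 and v' of v in R3;
by (a), u', Q1, u, v, Q4, v' is an induced P6 or C6. A vertex v of Q3 seeing r \<in> R2 but missing
q \<in> Q2 gives the induced P6 Q5, Q4, v, r, q, r' for a non-neighbour r' of r in R2. Finally, by (b)
every vertex of R2 has a neighbour in Q3; attaching two such neighbours (adjacent, as Q3 is a
clique) to an induced P4 or 2P3 of R2 produces an induced C4 or P6.\<close>

lemma has_induced_listI:
  assumes "length xs = n" "set xs \<subseteq> V" "distinct xs"
    and "\<And>i j. i < n \<Longrightarrow> j < n \<Longrightarrow> E (xs ! i) (xs ! j) \<longleftrightarrow> HE i j"
  shows "has_induced V E n HE"
  unfolding has_induced_def
  using assms by (intro exI[of _ "(!) xs"]) (auto simp: inj_on_def distinct_conv_nth)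

lemma graph_commute: "graph V E \<Longrightarrow> E x y \<longleftrightarrow> E y x"
  and graph_irrefl: "graph V E \<Longrightarrow> \<not> E x x"
  unfolding graph_def by blast+

lemma P6_free_no_induced_path:
  assumes "P_free 6 V E" "graph V E"
    and "a \<in> V" "b \<in> V" "c \<in> V" "d \<in> V" "e \<in> V" "f \<in> V"
    and "E a b" "E b c" "E c d" "E d e" "E e f"
    and "\<not> E a c" "\<not> E a d" "\<not> E a e" "\<not> E a f" "\<not> E b d" "\<not> E b e" "\<not> E b f"
      "\<not> E c e" "\<not> E c f" "\<not> E d f"
  shows False
proof -
  note E = graph_commute[OF assms(2)] and irr = graph_irrefl[OF assms(2)]
  have "distinct [a, b, c, d, e, f]"
    using assms(9-) irr by (auto simp: E)
  then have "has_induced V E 6 path_edges"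
    using assms(3-) irr by (intro has_induced_listI[of "[a, b, c, d, e, f]"])
      (auto simp: less_Suc_eq numeral_eq_Suc path_edges_def E)
  then show False using assms(1) by (simp add: P_free_def)
qed

lemma C6_free_no_induced_cycle:
  assumes "C_free 6 V E" "graph V E"
    and "a \<in> V" "b \<in> V" "c \<in> V" "d \<in> V" "e \<in> V" "f \<in> V"
    and "E a b" "E b c" "E c d" "E d e" "E e f" "E f a"
    and "\<not> E a c" "\<not> E a d" "\<not> E a e" "\<not> E b d" "\<not> E b e" "\<not> E b f"
      "\<not> E c e" "\<not> E c f" "\<not> E d f"
  shows False
proof -
  note E = graph_commute[OF assms(2)] and irr = graph_irrefl[OF assms(2)]
  have "distinct [a, b, c, d, e, f]"
    using assms(9-) irr by (auto simp: E)
  then have "has_induced V E 6 (cycle_edges 6)"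
    using assms(3-) irr by (intro has_induced_listI[of "[a, b, c, d, e, f]"])
      (auto simp: less_Suc_eq numeral_eq_Suc cycle_edges_def path_edges_def E)
  then show False using assms(1) by (simp add: C_free_def)
qed

lemma C4_free_no_induced_cycle:
  assumes "C_free 4 V E" "graph V E"
    and "a \<in> V" "b \<in> V" "c \<in> V" "d \<in> V" "a \<noteq> c" "b \<noteq> d"
    and "E a b" "E b c" "E c d" "E d a" "\<not> E a c" "\<not> E b d"
  shows False
proof -
  note E = graph_commute[OF assms(2)] and irr = graph_irrefl[OF assms(2)]
  have "distinct [a, b, c, d]"
    using assms(7-) irr by (auto simp: E)
  then have "has_induced V E 4 (cycle_edges 4)"
    using assms(3-) irr by (intro has_induced_listI[of "[a, b, c, d]"])
      (auto simp: less_Suc_eq numeral_eq_Suc cycle_edges_def path_edges_def E)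
  then show False using assms(1) by (simp add: C_free_def)
qed

lemma not_P_free_4E:
  assumes "\<not> P_free 4 W E"
  obtains a b c d where "a \<in> W" "b \<in> W" "c \<in> W" "d \<in> W" "distinct [a, b, c, d]"
    "E a b" "E b c" "E c d" "\<not> E a c" "\<not> E a d" "\<not> E b d"
proof -
  obtain f where f: "\<forall>i<4. f i \<in> W" "inj_on f {..<4}"
    "\<forall>i<4. \<forall>j<4. E (f i) (f j) \<longleftrightarrow> path_edges i j"
    using assms unfolding P_free_def has_induced_def by blast
  have neq: "f i \<noteq> f j" if "i < 4" "j < 4" "i \<noteq> j" for i j
    using inj_onD[OF f(2)] that by blast
  show thesis
    by (rule that[of "f 0" "f 1" "f 2" "f 3"])
      (use f neq in \<open>auto simp: path_edges_def\<close>)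
qed

lemma not_twoP3_freeE:
  assumes "\<not> twoP3_free W E"
  obtains a b c d e g where "a \<in> W" "b \<in> W" "c \<in> W" "d \<in> W" "e \<in> W" "g \<in> W"
    "distinct [a, b, c, d, e, g]" "E a b" "E b c" "E d e" "E e g" "\<not> E a c" "\<not> E d g"
    "\<not> E a d" "\<not> E a e" "\<not> E a g" "\<not> E b d" "\<not> E b e" "\<not> E b g"
    "\<not> E c d" "\<not> E c e" "\<not> E c g"
proof -
  obtain f where f: "\<forall>i<6. f i \<in> W" "inj_on f {..<6}"
    "\<forall>i<6. \<forall>j<6. E (f i) (f j) \<longleftrightarrow> twoP3_edges i j"
    using assms unfolding twoP3_free_def has_induced_def by blast
  have neq: "f i \<noteq> f j" if "i < 6" "j < 6" "i \<noteq> j" for i j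
    using inj_onD[OF f(2)] that by blast
  show thesis
    by (rule that[of "f 0" "f 1" "f 2" "f 3" "f 4" "f 5"])
      (use f neq in \<open>auto simp: twoP3_edges_def path_edges_def\<close>)
qed

locale belt_graph =
  fixes V :: "'a set" and E :: "'a \<Rightarrow> 'a \<Rightarrow> bool" and Q1 Q2 Q3 Q4 Q5 R2 R3 :: "'a set"
  assumes belt: "belt V E Q1 Q2 Q3 Q4 Q5 R2 R3"
begin

lemma graph: "graph V E"
  and P6_free: "P_free 6 V E" and C4_free: "C_free 4 V E" and C6_free: "C_free 6 V E"
  using belt unfolding belt_def by simp_all

lemma mirror: "belt V E Q4 Q3 Q2 Q1 Q5 R3 R2"
  using belt unfolding belt_def by (simp add: Int_commute Un_ac)

lemma partition: "Q1 \<union> Q2 \<union> Q3 \<union> Q4 \<union> Q5 \<union> R2 \<union> R3 = V"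
  and Q1_disjoint: "Q1 \<inter> Q3 = {}" "Q1 \<inter> R3 = {}"
  and nonempty: "Q1 \<noteq> {}" "Q4 \<noteq> {}" "Q5 \<noteq> {}"
  and Q3_clique: "clique E Q3"
  and complete_parts: "complete E Q1 (Q2 \<union> R2 \<union> Q5)" "complete E Q4 (Q3 \<union> R3 \<union> Q5)"
    "complete E Q2 R2" "complete E Q3 R3"
  and anticomplete_parts: "anticomplete E Q1 (Q3 \<union> R3 \<union> Q4)" "anticomplete E Q4 (Q2 \<union> R2 \<union> Q1)"
    "anticomplete E Q5 (Q2 \<union> R2 \<union> Q3 \<union> R3)"
  and has_neighbour_across: "\<forall>u\<in>Q2 \<union> R2. \<exists>w\<in>Q3 \<union> R3. E u w"
  and R2_not_universal: "\<forall>u\<in>R2. \<not> (\<forall>v\<in>R2. v \<noteq> u \<longrightarrow> E u v)"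
  using belt unfolding belt_def by simp_all

lemma E_commute: "E x y \<longleftrightarrow> E y x"
  using graph by (rule graph_commute)

lemma in_V:
  "x \<in> Q1 \<Longrightarrow> x \<in> V" "x \<in> Q2 \<Longrightarrow> x \<in> V" "x \<in> Q3 \<Longrightarrow> x \<in> V" "x \<in> Q4 \<Longrightarrow> x \<in> V"
  "x \<in> Q5 \<Longrightarrow> x \<in> V" "x \<in> R2 \<Longrightarrow> x \<in> V" "x \<in> R3 \<Longrightarrow> x \<in> V"
  using partition by blast+

lemma adjacent:
  "x \<in> Q1 \<Longrightarrow> y \<in> Q2 \<union> R2 \<union> Q5 \<Longrightarrow> E x y" "x \<in> Q1 \<Longrightarrow> y \<in> Q2 \<union> R2 \<union> Q5 \<Longrightarrow> E y x"
  "x \<in> Q4 \<Longrightarrow> y \<in> Q3 \<union> R3 \<union> Q5 \<Longrightarrow> E x y" "x \<in> Q4 \<Longrightarrow> y \<in> Q3 \<union> R3 \<union> Q5 \<Longrightarrow> E y x"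
  "x \<in> Q2 \<Longrightarrow> y \<in> R2 \<Longrightarrow> E x y" "x \<in> Q2 \<Longrightarrow> y \<in> R2 \<Longrightarrow> E y x"
  "x \<in> Q3 \<Longrightarrow> y \<in> R3 \<Longrightarrow> E x y" "x \<in> Q3 \<Longrightarrow> y \<in> R3 \<Longrightarrow> E y x"
  using complete_parts E_commute[THEN iffD1] unfolding complete_def by blast+

lemma nonadjacent:
  "x \<in> Q1 \<Longrightarrow> y \<in> Q3 \<union> R3 \<union> Q4 \<Longrightarrow> \<not> E x y" "x \<in> Q1 \<Longrightarrow> y \<in> Q3 \<union> R3 \<union> Q4 \<Longrightarrow> \<not> E y x"
  "x \<in> Q4 \<Longrightarrow> y \<in> Q2 \<union> R2 \<Longrightarrow> \<not> E x y" "x \<in> Q4 \<Longrightarrow> y \<in> Q2 \<union> R2 \<Longrightarrow> \<not> E y x"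
  "x \<in> Q5 \<Longrightarrow> y \<in> Q2 \<union> R2 \<union> Q3 \<union> R3 \<Longrightarrow> \<not> E x y"
  "x \<in> Q5 \<Longrightarrow> y \<in> Q2 \<union> R2 \<union> Q3 \<union> R3 \<Longrightarrow> \<not> E y x"
  using anticomplete_parts E_commute[THEN iffD1] unfolding anticomplete_def by blast+

text \<open>The simplifier applies \<open>E_commute\<close> by ordered rewriting, so local adjacency facts are
handed to it as \<open>facts[simplified E_commute]\<close>, in the same orientation.\<close>

lemmas belt_simps = in_V adjacent nonadjacent E_commute

lemma R2_nonadjacent_no_common_neighbour:
  assumes "u \<in> R2" "v \<in> R2" "u \<noteq> v" "\<not> E u v" "w \<in> Q3 \<union> R3" "E u w"
  shows "\<not> E v w"
proof
  assume "E v w"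
  obtain q1 where "q1 \<in> Q1" using nonempty by blast
  show False
    by (rule C4_free_no_induced_cycle[OF C4_free graph, of u q1 v w])
      (use assms \<open>E v w\<close> \<open>q1 \<in> Q1\<close> Q1_disjoint in \<open>auto simp: belt_simps\<close>)
qed

end

sublocale belt_graph \<subseteq> mirror: belt_graph V E Q4 Q3 Q2 Q1 Q5 R3 R2
  by unfold_locales (rule mirror)

context belt_graph
begin

lemma R2_R3_no_edge:
  assumes "u \<in> R2" "v \<in> R3"
  shows "\<not> E u v"
proof
  assume uv: "E u v"
  obtain u' where u': "u' \<in> R2" "u' \<noteq> u" "\<not> E u u'"
    using R2_not_universal assms(1) by blast
  obtain v' where v': "v' \<in> R3" "v' \<noteq> v" "\<not> E v v'"
    using mirror.R2_not_universal assms(2) by blast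
  have u'v: "\<not> E u' v"
    using R2_nonadjacent_no_common_neighbour[of u u' v] u' assms uv by auto
  have v'u: "\<not> E v' u"
    using mirror.R2_nonadjacent_no_common_neighbour[of v v' u] v' assms uv by (auto simp: E_commute)
  obtain q1 q4 where q: "q1 \<in> Q1" "q4 \<in> Q4"
    using nonempty by blast
  note facts = assms uv u' v' u'v v'u q
  show False
  proof (cases "E u' v'")
    case True
    show False
      by (rule C6_free_no_induced_cycle[OF C6_free graph, of u' q1 u v q4 v'])
        (simp_all add: facts[simplified E_commute] True[simplified E_commute] belt_simps)
  next
    case False
    show False
      by (rule P6_free_no_induced_path[OF P6_free graph, of u' q1 u v q4 v'])
        (simp_all add: facts[simplified E_commute] False[simplified E_commute] belt_simps)
  qed
qed

lemma R2_has_Q3_neighbour: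
  assumes "u \<in> R2"
  obtains w where "w \<in> Q3" "E u w"
  using has_neighbour_across R2_R3_no_edge assms by blast

lemma Q3_adjacent_R2_complete_Q2:
  assumes "v \<in> Q3" "r \<in> R2" "E v r" "q \<in> Q2"
  shows "E v q"
proof (rule ccontr)
  assume vq: "\<not> E v q"
  obtain r' where r': "r' \<in> R2" "r' \<noteq> r" "\<not> E r r'"
    using R2_not_universal assms(2) by blast
  have r'v: "\<not> E r' v"
    using R2_nonadjacent_no_common_neighbour[of r r' v] r' assms by (auto simp: E_commute)
  obtain q4 q5 where q: "q4 \<in> Q4" "q5 \<in> Q5"
    using nonempty by blast
  note facts = assms vq r' r'v q
  show False
    by (rule P6_free_no_induced_path[OF P6_free graph, of q5 q4 v r q r'])
      (simp_all add: facts[simplified E_commute] belt_simps)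
qed

lemma R2_P4_free: "P_free 4 R2 E"
proof (rule ccontr)
  assume "\<not> P_free 4 R2 E"
  then obtain a b c d where P4: "a \<in> R2" "b \<in> R2" "c \<in> R2" "d \<in> R2" "distinct [a, b, c, d]"
    "E a b" "E b c" "E c d" "\<not> E a c" "\<not> E a d" "\<not> E b d"
    by (rule not_P_free_4E)
  obtain x where x: "x \<in> Q3" "E d x" using R2_has_Q3_neighbour P4(4) by blast
  obtain y where y: "y \<in> Q3" "E a y" using R2_has_Q3_neighbour P4(1) by blast
  obtain q4 where q4: "q4 \<in> Q4" using nonempty by blast
  have ax: "\<not> E a x" and bx: "\<not> E b x"
    using R2_nonadjacent_no_common_neighbour[of d a x] R2_nonadjacent_no_common_neighbour[of d b x]
      P4 x by (auto simp: E_commute)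
  have cy: "\<not> E c y" and dy: "\<not> E d y"
    using R2_nonadjacent_no_common_neighbour[of a c y] R2_nonadjacent_no_common_neighbour[of a d y]
      P4 y by (auto simp: E_commute)
  have xy: "E x y"
    using Q3_clique x y dy unfolding clique_def by metis
  have "b \<noteq> x" "y \<noteq> c"
    using P4 x y by (auto simp: E_commute)
  note facts = P4 x y q4 ax bx cy dy xy this
  consider "\<not> E c x" | "E c x" "E b y" | "E c x" "\<not> E b y"
    by blast
  then show False
  proof cases
    case 1
    show False
      by (rule P6_free_no_induced_path[OF P6_free graph, of a b c d x q4])
        (simp_all add: facts[simplified E_commute] 1[simplified E_commute] belt_simps)
  next
    case 2
    show False
      by (rule C4_free_no_induced_cycle[OF C4_free graph, of y b c x])
        (simp_all add: facts[simplified E_commute] 2[simplified E_commute] belt_simps)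
  next
    case 3
    show False
      by (rule P6_free_no_induced_path[OF P6_free graph, of d c b a y q4])
        (simp_all add: facts[simplified E_commute] 3[simplified E_commute] belt_simps)
  qed
qed

lemma R2_twoP3_free: "twoP3_free R2 E"
proof (rule ccontr)
  assume "\<not> twoP3_free R2 E"
  then obtain a b c d e g where P3: "a \<in> R2" "b \<in> R2" "c \<in> R2" "d \<in> R2" "e \<in> R2" "g \<in> R2"
    "distinct [a, b, c, d, e, g]" "E a b" "E b c" "E d e" "E e g" "\<not> E a c" "\<not> E d g"
    "\<not> E a d" "\<not> E a e" "\<not> E a g" "\<not> E b d" "\<not> E b e" "\<not> E b g"
    "\<not> E c d" "\<not> E c e" "\<not> E c g"
    by (rule not_twoP3_freeE)
  obtain x where x: "x \<in> Q3" "E a x" using R2_has_Q3_neighbour P3(1) by blast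
  obtain y where y: "y \<in> Q3" "E d y" using R2_has_Q3_neighbour P3(4) by blast
  have x_non: "\<not> E c x" "\<not> E d x" "\<not> E e x" "\<not> E g x"
    using R2_nonadjacent_no_common_neighbour[of a _ x] P3 x by (auto simp: E_commute)
  have y_non: "\<not> E a y" "\<not> E b y" "\<not> E c y" "\<not> E g y"
    using R2_nonadjacent_no_common_neighbour[of d _ y] P3 y by (auto simp: E_commute)
  have xy: "E x y"
    using Q3_clique x y y_non(1) unfolding clique_def by metis
  note facts = P3 x y x_non y_non xy
  consider "\<not> E b x" | "E b x" "\<not> E e y" | "E b x" "E e y"
    by blast
  then show False
  proof cases
    case 1
    show False
      by (rule P6_free_no_induced_path[OF P6_free graph, of c b a x y d])
        (simp_all add: facts[simplified E_commute] 1[simplified E_commute] belt_simps)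
  next
    case 2
    show False
      by (rule P6_free_no_induced_path[OF P6_free graph, of g e d y x a])
        (simp_all add: facts[simplified E_commute] 2[simplified E_commute] belt_simps)
  next
    case 3
    show False
      by (rule P6_free_no_induced_path[OF P6_free graph, of c b x y e g])
        (simp_all add: facts[simplified E_commute] 3[simplified E_commute] belt_simps)
  qed
qed

end

theorem theorem4p1:
  assumes "belt V E Q1 Q2 Q3 Q4 Q5 R2 R3"
  shows "(\<forall>u\<in>R2. \<forall>v\<in>R2. u \<noteq> v \<and> \<not> E u v \<longrightarrow> \<not> (\<exists>w\<in>Q3. E u w \<and> E v w))
       \<and> (\<forall>u\<in>R3. \<forall>v\<in>R3. u \<noteq> v \<and> \<not> E u v \<longrightarrow> \<not> (\<exists>w\<in>Q2. E u w \<and> E v w))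
       \<and> (\<forall>u\<in>R2. \<forall>v\<in>R3. \<not> E u v)
       \<and> (\<forall>v\<in>Q2. (\<exists>r\<in>R3. E v r) \<longrightarrow> (\<forall>q\<in>Q3. E v q))
       \<and> (\<forall>v\<in>Q3. (\<exists>r\<in>R2. E v r) \<longrightarrow> (\<forall>q\<in>Q2. E v q))
       \<and> P_free 4 R2 E \<and> twoP3_free R2 E
       \<and> P_free 4 R3 E \<and> twoP3_free R3 E"
proof -
  interpret belt_graph V E Q1 Q2 Q3 Q4 Q5 R2 R3
    using assms by (rule belt_graph.intro)
  show ?thesis
    using R2_nonadjacent_no_common_neighbour mirror.R2_nonadjacent_no_common_neighbour
      R2_R3_no_edge Q3_adjacent_R2_complete_Q2 mirror.Q3_adjacent_R2_complete_Q2
      R2_P4_free R2_twoP3_free mirror.R2_P4_free mirror.R2_twoP3_free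
    by blast
qed

end
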